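(* In the setting below, with $\phi_X,\phi_Y,\phi_{Z^s}$ extended to the closures $\overline{\Omega_X},\overline{\Omega_Y},\overline{\Omega_{Z^s}}$ by $\phi_W(p,s)=\phi_{Z_{i(p)}}(p,s)$ for $(p,s)\in\overline{\Omega_W}\setminus\Omega_W$, $s\in I^i(p)$: (a) $\phi_X(p,t)=\phi_{Z^s}(p,t)$ for all $(p,t)\in\overline{\Omega_X}\cap\overline{\Omega_{Z^s}}$; (b) $\phi_Y(p,t)=\phi_{Z^s}(p,t)$ for all $(p,t)\in\overline{\Omega_Y}\cap\overline{\Omega_{Z^s}}$; (c) $\phi_X(p,t)=\phi_Y(p,t)$ for all $(p,t)\in\overline{\Omega_X}\cap\overline{\Omega_Y}$.
   Context: $M$ is a closed $3$-dimensional manifold, $h:M\to\mathbb{R}$ smooth with regular value $0$, $\Sigma=h^{-1}(0)$, $\Sigma^\pm$ as $h\ge0$, $h\le0$; $Z=(X,Y)$ equals the smooth field $X$ on $\Sigma^+$ and $Y$ on $\Sigma^-$; $Wh=dh(W)$. Crossing regions $\Sigma^{c+}=\{Xh,Yh>0\}$, $\Sigma^{c-}=\{Xh,Yh<0\}$, sliding region $\Sigma^s=\{Xh<0<Yh\}$, sliding field $Z^s=\frac{Yh\,X-Xh\,Y}{Yh-Xh}$ on $\Sigma^S=\Sigma^s\cup\partial\Sigma^s$. Tangencies $S_Z=\{Xh=0\}\cup\{Yh=0\}$ in $\Sigma$, with folds/cusps and visibility as usual ($X$: fold $X^2h\ne0$, visible iff $>0$; cusp $X^2h=0\ne X^3h$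 with $dh,dXh,dX^2h$ independent, visible iff $X^3h>0$; for $Y$ visibility signs reversed). It is assumed $\Sigma=\Sigma^{c+}\cup\Sigma^{c-}\cup\Sigma^s\cup S_Z$ and every $p\in S_Z$ lies in one of the cases: A1 visible fold of $X$ with $Yh>0$ (or of $Y$ with $Xh<0$); A2 invisible fold of $X$ with $Yh>0$ (or of $Y$ with $Xh<0$); A3 invisible cusp of $X$ with $Yh>0$ (or of $Y$ with $Xh<0$); A4 visible cusp of $X$ with $Yh>0$ (or of $Y$ with $Xh<0$); B1 visible fold of one of $X,Y$ and invisible fold of the other, $p\in\partial\Sigma^{c+}\cap\partial\Sigma^{c-}$; B2 invisible cusp of one of $X,Y$ and invisible fold of the other, with $S_X,S_Y$ tangent at $p$. Exit times: for $p\in\Sigma^+$, $t_X^+(p)=\infty$ if $\varphi_X(p,[0,\infty))\subseteq\Sigma^+$; otherwise $t_X^+(p)=\inf\{t>0:\varphi_X(p,t)\in S_X^{ic}\cup\{Xh<0\}\}$ if $\varphi_X(p,[0,t])\subset\Sigma^+$ for some $t>0$, and $0$ otherwise ($S_X^{ic}$ = invisible cusps of $X$); $t_Y^+$ and $t_{Z^s}^+$ (relative to $\Sigma^S$ and $\partial\Sigma^s$) analogously. Construction: for $p\in M$ put $p_0=p$; for a point $q$, its associated field is $X$ if $q\in\mathrm{int}\Sigma^+$, or $q\in\Sigma^{c+}$, or $q\in\mathrm{A1}\cup\mathrm{A4}\cup\mathrm{B1}$ is a visible fold or visible cusp of $X$; $Y$ if $q\in\mathrm{int}\Sigma^-$,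 or $q\in\Sigma^{c-}$, or $q\in\mathrm{A1}\cup\mathrm{A4}\cup\mathrm{B1}$ is a visible fold or cusp of $Y$; $Z^s$ if $q\in\Sigma^s\cup\mathrm{A2}\cup\mathrm{A3}\cup\mathrm{B2}$. Let $Z_{i(p)}$ be the field associated with $p_i$ and $p_{i}=\varphi_{Z_{i-1(p)}}(p_{i-1},t^+_{Z_{i-1(p)}}(p_{i-1}))$ for $i\ge1$. Set $a_{i(p)}=\sum_{j=0}^i t^+_{Z_{j(p)}}(p_j)$, $a_{-1(p)}=0$, $I^i(p)=[a_{i-1(p)},a_{i(p)}]$, and $\phi_{Z_{i(p)}}(p,s)=\varphi_{Z_{i(p)}}(p_i,s-a_{i-1(p)})$ for $s\in I^i(p)$. For $W\in\{X,Y,Z^s\}$ let $I_W(p)=\bigcup\{I^i(p): Z_{i(p)}=W\}$, $\Omega_W=\{(p,t)\in M\times\mathbb{R}^+: t\in I_W(p)\}$, and $\phi_W:\Omega_W\to M$, $\phi_W(p,t)=\varphi_W(p_i,t-a_{i-1(p)})$ for $t\in I^i(p)$ with $Z_{i(p)}=W$. *)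

theory Defs
  imports "HOL-Analysis.Analysis"
begin

text \<open>C-infinity on an open set: all iterated partial derivatives exist and are continuous.\<close>
definition smooth_on :: "'a::euclidean_space set \<Rightarrow> ('a \<Rightarrow> 'b::euclidean_space) \<Rightarrow> bool" where
  "smooth_on S f \<longleftrightarrow> (\<exists>D::'a list \<Rightarrow> 'a \<Rightarrow> 'b.
      (\<forall>x\<in>S. D [] x = f x) \<and> (\<forall>bs. continuous_on S (D bs)) \<and>
      (\<forall>bs. \<forall>b\<in>Basis. \<forall>x\<in>S.
          ((\<lambda>t. D bs (x + t *\<^sub>R b)) has_vector_derivative D (b # bs) x) (at 0)))"

definition smooth_submanifold :: "nat \<Rightarrow> 'a::euclidean_space set \<Rightarrow> bool" where
  "smooth_submanifold k M \<longleftrightarrow> (\<forall>p\<in>M. \<exists>U V (\<psi>::'a\<Rightarrow>'a) (\<kappa>::'a\<Rightarrow>'a) L.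
      open U \<and> p \<in> U \<and> open V \<and> smooth_on U \<psi> \<and> smooth_on V \<kappa> \<and>
      (\<forall>x\<in>U. \<psi> x \<in> V \<and> \<kappa> (\<psi> x) = x) \<and> (\<forall>y\<in>V. \<kappa> y \<in> U \<and> \<psi> (\<kappa> y) = y) \<and>
      subspace L \<and> dim L = k \<and> \<psi> ` (M \<inter> U) = V \<inter> L)"

text \<open>Closed (compact, boundaryless) k-manifold, realised as an embedded submanifold.\<close>
definition closed_manifold :: "nat \<Rightarrow> 'a::euclidean_space set \<Rightarrow> bool" where
  "closed_manifold k M \<longleftrightarrow> compact M \<and> smooth_submanifold k M"

definition tangent_space :: "'a::euclidean_space set \<Rightarrow> 'a \<Rightarrow> 'a set" where
  "tangent_space M p = {v. \<exists>\<gamma>::real \<Rightarrow> 'a. (\<forall>t. \<gamma> t \<in> M) \<and> \<gamma> 0 = p \<and>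
                              (\<gamma> has_vector_derivative v) (at 0)}"

definition vector_field_on :: "'a::euclidean_space set \<Rightarrow> ('a \<Rightarrow> 'a) \<Rightarrow> bool" where
  "vector_field_on M W \<longleftrightarrow> smooth_on UNIV W \<and> (\<forall>p\<in>M. W p \<in> tangent_space M p)"

definition Lie :: "('a::euclidean_space \<Rightarrow> 'a) \<Rightarrow> ('a \<Rightarrow> real) \<Rightarrow> 'a \<Rightarrow> real" where
  "Lie W f p = frechet_derivative f (at p) (W p)"

definition regular_value_on :: "'a::euclidean_space set \<Rightarrow> ('a \<Rightarrow> real) \<Rightarrow> real \<Rightarrow> bool" where
  "regular_value_on M h c \<longleftrightarrow>
     (\<forall>p\<in>M. h p = c \<longrightarrow> (\<exists>v\<in>tangent_space M p. frechet_derivative h (at p) v \<noteq> 0))"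

definition fwd_sol :: "('a::euclidean_space \<Rightarrow> 'a) \<Rightarrow> 'a \<Rightarrow> (real \<Rightarrow> 'a) \<Rightarrow> bool" where
  "fwd_sol W p \<gamma> \<longleftrightarrow> \<gamma> 0 = p \<and>
     (\<forall>s\<ge>0. (\<gamma> has_vector_derivative W (\<gamma> s)) (at s within {0..}))"

text \<open>Forward flow of W through p (the trivial curve if no forward solution exists).\<close>
definition flow :: "('a::euclidean_space \<Rightarrow> 'a) \<Rightarrow> 'a \<Rightarrow> real \<Rightarrow> 'a" where
  "flow W p = (if \<exists>\<gamma>. fwd_sol W p \<gamma> then (SOME \<gamma>. fwd_sol W p \<gamma>) else (\<lambda>_. p))"

definition Sig :: "'a set \<Rightarrow> ('a \<Rightarrow> real) \<Rightarrow> 'a set" where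
  "Sig M h = {p\<in>M. h p = 0}"
definition SigP :: "'a set \<Rightarrow> ('a \<Rightarrow> real) \<Rightarrow> 'a set" where
  "SigP M h = {p\<in>M. h p \<ge> 0}"
definition SigM :: "'a set \<Rightarrow> ('a \<Rightarrow> real) \<Rightarrow> 'a set" where
  "SigM M h = {p\<in>M. h p \<le> 0}"

definition Scp :: "'a::euclidean_space set \<Rightarrow> ('a \<Rightarrow> real) \<Rightarrow> ('a \<Rightarrow> 'a) \<Rightarrow> ('a \<Rightarrow> 'a) \<Rightarrow> 'a set" where
  "Scp M h X Y = {p \<in> Sig M h. Lie X h p > 0 \<and> Lie Y h p > 0}"
definition Scm :: "'a::euclidean_space set \<Rightarrow> ('a \<Rightarrow> real) \<Rightarrow> ('a \<Rightarrow> 'a) \<Rightarrow> ('a \<Rightarrow> 'a) \<Rightarrow> 'a set" where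
  "Scm M h X Y = {p \<in> Sig M h. Lie X h p < 0 \<and> Lie Y h p < 0}"
definition Ss :: "'a::euclidean_space set \<Rightarrow> ('a \<Rightarrow> real) \<Rightarrow> ('a \<Rightarrow> 'a) \<Rightarrow> ('a \<Rightarrow> 'a) \<Rightarrow> 'a set" where
  "Ss M h X Y = {p \<in> Sig M h. Lie X h p < 0 \<and> 0 < Lie Y h p}"

text \<open>Boundary (relative to Sigma) of a relatively open subset of Sigma.\<close>
definition bdry :: "'a::topological_space set \<Rightarrow> 'a set" where
  "bdry A = closure A - A"

definition SigSl :: "'a::euclidean_space set \<Rightarrow> ('a \<Rightarrow> real) \<Rightarrow> ('a \<Rightarrow> 'a) \<Rightarrow> ('a \<Rightarrow> 'a) \<Rightarrow> 'a set" where
  "SigSl M h X Y = Ss M h X Y \<union> bdry (Ss M h X Y)"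

definition Zs :: "('a::euclidean_space \<Rightarrow> real) \<Rightarrow> ('a \<Rightarrow> 'a) \<Rightarrow> ('a \<Rightarrow> 'a) \<Rightarrow> 'a \<Rightarrow> 'a" where
  "Zs h X Y p = (1 / (Lie Y h p - Lie X h p)) *\<^sub>R (Lie Y h p *\<^sub>R X p - Lie X h p *\<^sub>R Y p)"

definition tang :: "'a::euclidean_space set \<Rightarrow> ('a \<Rightarrow> real) \<Rightarrow> ('a \<Rightarrow> 'a) \<Rightarrow> 'a set" where
  "tang M h W = {p \<in> Sig M h. Lie W h p = 0}"

definition indep3 :: "'a::euclidean_space set \<Rightarrow> 'a \<Rightarrow> ('a \<Rightarrow> real) \<Rightarrow> ('a \<Rightarrow> real) \<Rightarrow> ('a \<Rightarrow> real) \<Rightarrow> bool" where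
  "indep3 M p f g k \<longleftrightarrow> (\<forall>a b c. (\<forall>v\<in>tangent_space M p.
       a * frechet_derivative f (at p) v + b * frechet_derivative g (at p) v
         + c * frechet_derivative k (at p) v = 0) \<longrightarrow> a = 0 \<and> b = 0 \<and> c = 0)"

definition is_fold :: "'a::euclidean_space set \<Rightarrow> ('a \<Rightarrow> real) \<Rightarrow> ('a \<Rightarrow> 'a) \<Rightarrow> 'a \<Rightarrow> bool" where
  "is_fold M h W p \<longleftrightarrow> p \<in> tang M h W \<and> Lie W (Lie W h) p \<noteq> 0"

definition is_cusp :: "'a::euclidean_space set \<Rightarrow> ('a \<Rightarrow> real) \<Rightarrow> ('a \<Rightarrow> 'a) \<Rightarrow> 'a \<Rightarrow> bool" where
  "is_cusp M h W p \<longleftrightarrow> p \<in> tang M h W \<and> Lie W (Lie W h) p = 0 \<and>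
      Lie W (Lie W (Lie W h)) p \<noteq> 0 \<and> indep3 M p h (Lie W h) (Lie W (Lie W h))"

text \<open>Visibility; the sign sigma is 1 for X (upper field) and -1 for Y (lower field).\<close>
definition vis_fold :: "'a::euclidean_space set \<Rightarrow> ('a \<Rightarrow> real) \<Rightarrow> ('a \<Rightarrow> 'a) \<Rightarrow> real \<Rightarrow> 'a \<Rightarrow> bool" where
  "vis_fold M h W \<sigma> p \<longleftrightarrow> is_fold M h W p \<and> \<sigma> * Lie W (Lie W h) p > 0"
definition invis_fold :: "'a::euclidean_space set \<Rightarrow> ('a \<Rightarrow> real) \<Rightarrow> ('a \<Rightarrow> 'a) \<Rightarrow> real \<Rightarrow> 'a \<Rightarrow> bool" where
  "invis_fold M h W \<sigma> p \<longleftrightarrow> is_fold M h W p \<and> \<sigma> * Lie W (Lie W h) p < 0"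
definition vis_cusp :: "'a::euclidean_space set \<Rightarrow> ('a \<Rightarrow> real) \<Rightarrow> ('a \<Rightarrow> 'a) \<Rightarrow> real \<Rightarrow> 'a \<Rightarrow> bool" where
  "vis_cusp M h W \<sigma> p \<longleftrightarrow> is_cusp M h W p \<and> \<sigma> * Lie W (Lie W (Lie W h)) p > 0"
definition invis_cusp :: "'a::euclidean_space set \<Rightarrow> ('a \<Rightarrow> real) \<Rightarrow> ('a \<Rightarrow> 'a) \<Rightarrow> real \<Rightarrow> 'a \<Rightarrow> bool" where
  "invis_cusp M h W \<sigma> p \<longleftrightarrow> is_cusp M h W p \<and> \<sigma> * Lie W (Lie W (Lie W h)) p < 0"

text \<open>S_X and S_Y tangent at p: their tangent lines ker dh \<inter> ker dXh and ker dh \<inter> ker dYh in T_pM coincide.\<close>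
definition tangent_tang :: "'a::euclidean_space set \<Rightarrow> ('a \<Rightarrow> real) \<Rightarrow> ('a \<Rightarrow> 'a) \<Rightarrow> ('a \<Rightarrow> 'a) \<Rightarrow> 'a \<Rightarrow> bool" where
  "tangent_tang M h X Y p \<longleftrightarrow>
     {v\<in>tangent_space M p. frechet_derivative h (at p) v = 0 \<and> frechet_derivative (Lie X h) (at p) v = 0}
   = {v\<in>tangent_space M p. frechet_derivative h (at p) v = 0 \<and> frechet_derivative (Lie Y h) (at p) v = 0}"

definition A1 :: "'a::euclidean_space set \<Rightarrow> ('a \<Rightarrow> real) \<Rightarrow> ('a \<Rightarrow> 'a) \<Rightarrow> ('a \<Rightarrow> 'a) \<Rightarrow> 'a \<Rightarrow> bool" where
  "A1 M h X Y p \<longleftrightarrow> (vis_fold M h X 1 p \<and> Lie Y h p > 0) \<or> (vis_fold M h Y (-1) p \<and> Lie X h p < 0)"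
definition A2 :: "'a::euclidean_space set \<Rightarrow> ('a \<Rightarrow> real) \<Rightarrow> ('a \<Rightarrow> 'a) \<Rightarrow> ('a \<Rightarrow> 'a) \<Rightarrow> 'a \<Rightarrow> bool" where
  "A2 M h X Y p \<longleftrightarrow> (invis_fold M h X 1 p \<and> Lie Y h p > 0) \<or> (invis_fold M h Y (-1) p \<and> Lie X h p < 0)"
definition A3 :: "'a::euclidean_space set \<Rightarrow> ('a \<Rightarrow> real) \<Rightarrow> ('a \<Rightarrow> 'a) \<Rightarrow> ('a \<Rightarrow> 'a) \<Rightarrow> 'a \<Rightarrow> bool" where
  "A3 M h X Y p \<longleftrightarrow> (invis_cusp M h X 1 p \<and> Lie Y h p > 0) \<or> (invis_cusp M h Y (-1) p \<and> Lie X h p < 0)"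
definition A4 :: "'a::euclidean_space set \<Rightarrow> ('a \<Rightarrow> real) \<Rightarrow> ('a \<Rightarrow> 'a) \<Rightarrow> ('a \<Rightarrow> 'a) \<Rightarrow> 'a \<Rightarrow> bool" where
  "A4 M h X Y p \<longleftrightarrow> (vis_cusp M h X 1 p \<and> Lie Y h p > 0) \<or> (vis_cusp M h Y (-1) p \<and> Lie X h p < 0)"
definition B1 :: "'a::euclidean_space set \<Rightarrow> ('a \<Rightarrow> real) \<Rightarrow> ('a \<Rightarrow> 'a) \<Rightarrow> ('a \<Rightarrow> 'a) \<Rightarrow> 'a \<Rightarrow> bool" where
  "B1 M h X Y p \<longleftrightarrow> ((vis_fold M h X 1 p \<and> invis_fold M h Y (-1) p) \<or>
                       (vis_fold M h Y (-1) p \<and> invis_fold M h X 1 p)) \<and>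
                      p \<in> bdry (Scp M h X Y) \<inter> bdry (Scm M h X Y)"
definition B2 :: "'a::euclidean_space set \<Rightarrow> ('a \<Rightarrow> real) \<Rightarrow> ('a \<Rightarrow> 'a) \<Rightarrow> ('a \<Rightarrow> 'a) \<Rightarrow> 'a \<Rightarrow> bool" where
  "B2 M h X Y p \<longleftrightarrow> ((invis_cusp M h X 1 p \<and> invis_fold M h Y (-1) p) \<or>
                       (invis_cusp M h Y (-1) p \<and> invis_fold M h X 1 p)) \<and>
                      tangent_tang M h X Y p"

definition standing_hyps :: "'a::euclidean_space set \<Rightarrow> ('a \<Rightarrow> real) \<Rightarrow> ('a \<Rightarrow> 'a) \<Rightarrow> ('a \<Rightarrow> 'a) \<Rightarrow> bool" where
  "standing_hyps M h X Y \<longleftrightarrow>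
     closed_manifold 3 M \<and> smooth_on UNIV h \<and> regular_value_on M h 0 \<and>
     vector_field_on M X \<and> vector_field_on M Y \<and>
     Sig M h = Scp M h X Y \<union> Scm M h X Y \<union> Ss M h X Y \<union> (tang M h X \<union> tang M h Y) \<and>
     (\<forall>p \<in> tang M h X \<union> tang M h Y.
        A1 M h X Y p \<or> A2 M h X Y p \<or> A3 M h X Y p \<or> A4 M h X Y p \<or> B1 M h X Y p \<or> B2 M h X Y p)"

datatype fld = FX | FY | FZs

definition fieldof :: "('a::euclidean_space \<Rightarrow> real) \<Rightarrow> ('a \<Rightarrow> 'a) \<Rightarrow> ('a \<Rightarrow> 'a) \<Rightarrow> fld \<Rightarrow> 'a \<Rightarrow> 'a" where
  "fieldof h X Y w = (case w of FX \<Rightarrow> X | FY \<Rightarrow> Y | FZs \<Rightarrow> Zs h X Y)"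

definition assoc_fld :: "'a::euclidean_space set \<Rightarrow> ('a \<Rightarrow> real) \<Rightarrow> ('a \<Rightarrow> 'a) \<Rightarrow> ('a \<Rightarrow> 'a) \<Rightarrow> 'a \<Rightarrow> fld" where
  "assoc_fld M h X Y q =
    (if (q \<in> M \<and> h q > 0) \<or> q \<in> Scp M h X Y \<or>
        ((A1 M h X Y q \<or> A4 M h X Y q \<or> B1 M h X Y q) \<and> (vis_fold M h X 1 q \<or> vis_cusp M h X 1 q))
     then FX
     else if (q \<in> M \<and> h q < 0) \<or> q \<in> Scm M h X Y \<or>
        ((A1 M h X Y q \<or> A4 M h X Y q \<or> B1 M h X Y q) \<and> (vis_fold M h Y (-1) q \<or> vis_cusp M h Y (-1) q))
     then FY
     else FZs)"

definition exit_time :: "('a::euclidean_space \<Rightarrow> 'a) \<Rightarrow> 'a set \<Rightarrow> 'a set \<Rightarrow> 'a \<Rightarrow> ereal" where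
  "exit_time W R E p =
     (if flow W p ` {0..} \<subseteq> R then \<infinity>
      else if \<exists>t>0. flow W p ` {0..t} \<subseteq> R
           then Inf {ereal t | t. t > 0 \<and> flow W p t \<in> E}
      else 0)"

definition texit :: "'a::euclidean_space set \<Rightarrow> ('a \<Rightarrow> real) \<Rightarrow> ('a \<Rightarrow> 'a) \<Rightarrow> ('a \<Rightarrow> 'a) \<Rightarrow> fld \<Rightarrow> 'a \<Rightarrow> ereal" where
  "texit M h X Y w = (case w of
      FX \<Rightarrow> exit_time X (SigP M h)
              ({q. invis_cusp M h X 1 q} \<union> {q \<in> Sig M h. Lie X h q < 0})
    | FY \<Rightarrow> exit_time Y (SigM M h)
              ({q. invis_cusp M h Y (-1) q} \<union> {q \<in> Sig M h. Lie Y h q > 0})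
    | FZs \<Rightarrow> exit_time (Zs h X Y) (SigSl M h X Y) (bdry (Ss M h X Y)))"

definition next_pt :: "'a::euclidean_space set \<Rightarrow> ('a \<Rightarrow> real) \<Rightarrow> ('a \<Rightarrow> 'a) \<Rightarrow> ('a \<Rightarrow> 'a) \<Rightarrow> 'a \<Rightarrow> 'a" where
  "next_pt M h X Y q = (let w = assoc_fld M h X Y q in
      flow (fieldof h X Y w) q (real_of_ereal (texit M h X Y w q)))"

definition pt :: "'a::euclidean_space set \<Rightarrow> ('a \<Rightarrow> real) \<Rightarrow> ('a \<Rightarrow> 'a) \<Rightarrow> ('a \<Rightarrow> 'a) \<Rightarrow> 'a \<Rightarrow> nat \<Rightarrow> 'a" where
  "pt M h X Y p i = (next_pt M h X Y ^^ i) p"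

definition Zi :: "'a::euclidean_space set \<Rightarrow> ('a \<Rightarrow> real) \<Rightarrow> ('a \<Rightarrow> 'a) \<Rightarrow> ('a \<Rightarrow> 'a) \<Rightarrow> 'a \<Rightarrow> nat \<Rightarrow> fld" where
  "Zi M h X Y p i = assoc_fld M h X Y (pt M h X Y p i)"

text \<open>aa p i = a_{i-1(p)}, so aa p 0 = a_{-1(p)} = 0 and aa p (Suc i) = a_{i(p)}.\<close>
definition aa :: "'a::euclidean_space set \<Rightarrow> ('a \<Rightarrow> real) \<Rightarrow> ('a \<Rightarrow> 'a) \<Rightarrow> ('a \<Rightarrow> 'a) \<Rightarrow> 'a \<Rightarrow> nat \<Rightarrow> ereal" where
  "aa M h X Y p i = (\<Sum>j<i. texit M h X Y (Zi M h X Y p j) (pt M h X Y p j))"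

text \<open>I^i(p) = [a_{i-1(p)}, a_{i(p)}] (real times only)\<close>
definition Iint :: "'a::euclidean_space set \<Rightarrow> ('a \<Rightarrow> real) \<Rightarrow> ('a \<Rightarrow> 'a) \<Rightarrow> ('a \<Rightarrow> 'a) \<Rightarrow> 'a \<Rightarrow> nat \<Rightarrow> real set" where
  "Iint M h X Y p i = {t. aa M h X Y p i \<le> ereal t \<and> ereal t \<le> aa M h X Y p (Suc i)}"

definition phiZi :: "'a::euclidean_space set \<Rightarrow> ('a \<Rightarrow> real) \<Rightarrow> ('a \<Rightarrow> 'a) \<Rightarrow> ('a \<Rightarrow> 'a) \<Rightarrow> 'a \<Rightarrow> nat \<Rightarrow> real \<Rightarrow> 'a" where
  "phiZi M h X Y p i s = flow (fieldof h X Y (Zi M h X Y p i)) (pt M h X Y p i)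
                              (s - real_of_ereal (aa M h X Y p i))"

definition IW :: "'a::euclidean_space set \<Rightarrow> ('a \<Rightarrow> real) \<Rightarrow> ('a \<Rightarrow> 'a) \<Rightarrow> ('a \<Rightarrow> 'a) \<Rightarrow> fld \<Rightarrow> 'a \<Rightarrow> real set" where
  "IW M h X Y w p = (\<Union>i\<in>{i. Zi M h X Y p i = w}. Iint M h X Y p i)"

definition OmegaW :: "'a::euclidean_space set \<Rightarrow> ('a \<Rightarrow> real) \<Rightarrow> ('a \<Rightarrow> 'a) \<Rightarrow> ('a \<Rightarrow> 'a) \<Rightarrow> fld \<Rightarrow> ('a \<times> real) set" where
  "OmegaW M h X Y w = {(p, t). p \<in> M \<and> 0 \<le> t \<and> t \<in> IW M h X Y w p}"

text \<open>phi_W on Omega_W, extended to the closure of Omega_W by phi_{Z_{i(p)}}(p,s), s in I^i(p).\<close>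
definition phiW :: "'a::euclidean_space set \<Rightarrow> ('a \<Rightarrow> real) \<Rightarrow> ('a \<Rightarrow> 'a) \<Rightarrow> ('a \<Rightarrow> 'a) \<Rightarrow> fld \<Rightarrow> 'a \<Rightarrow> real \<Rightarrow> 'a" where
  "phiW M h X Y w p t =
     (if (p, t) \<in> OmegaW M h X Y w
      then phiZi M h X Y p (SOME i. t \<in> Iint M h X Y p i \<and> Zi M h X Y p i = w) t
      else phiZi M h X Y p (SOME i. t \<in> Iint M h X Y p i) t)"

end

theory Submission
  imports Defs
begin

text \<open>The extended maps \<open>\<phi>\<^sub>W\<close> do not depend on \<open>W\<close> at all. The piece on \<open>I\<^sup>i(p)\<close> ends at
  \<open>\<phi>\<^sub>Z\<^sub>i(p\<^sub>i, t\<^sup>+) = p\<^sub>i\<^sub>+\<^sub>1\<close>, which is exactly where the next piece starts, since a flow sits at its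
  initial point at time 0. Because the intervals \<open>I\<^sup>i(p)\<close> are consecutive, any two of them that
  contain \<open>t\<close> are joined by a chain of pieces meeting at the junction time \<open>t\<close>, so all pieces
  whose interval contains \<open>t\<close> give the same point. Neither the closures nor the standing
  hypotheses play a role.\<close>

lemma flow_at_0: "flow W p 0 = p"
proof (cases "\<exists>\<gamma>. fwd_sol W p \<gamma>")
  case True
  then have "fwd_sol W p (SOME \<gamma>. fwd_sol W p \<gamma>)" by (rule someI_ex)
  then have "(SOME \<gamma>. fwd_sol W p \<gamma>) 0 = p" by (simp add: fwd_sol_def)
  with True show ?thesis by (simp add: flow_def)
qed (simp add: flow_def)

lemma exit_time_nonneg: "0 \<le> exit_time W R E p"
  unfolding exit_time_def by (auto intro!: Inf_greatest)

lemma texit_nonneg: "0 \<le> texit M h X Y w q"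
  by (cases w) (simp_all add: texit_def exit_time_nonneg)

lemma aa_Suc:
  "aa M h X Y p (Suc k) = aa M h X Y p k + texit M h X Y (Zi M h X Y p k) (pt M h X Y p k)"
  by (simp add: aa_def)

lemma aa_nonneg: "0 \<le> aa M h X Y p k"
  unfolding aa_def by (intro sum_nonneg texit_nonneg)

lemma mono_aa: "mono (aa M h X Y p)"
proof (rule incseq_SucI)
  fix k
  show "aa M h X Y p k \<le> aa M h X Y p (Suc k)"
    unfolding aa_Suc by (rule add_increasing2[OF texit_nonneg order_refl])
qed

lemma mono_chain_const_at_junctions:
  fixes a :: "nat \<Rightarrow> 'b::linorder"
  assumes "mono a"
    and junction: "\<And>k. a (Suc k) = x \<Longrightarrow> v k = v (Suc k)"
    and "a i \<le> x" "x \<le> a (Suc i)" "a j \<le> x" "x \<le> a (Suc j)"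
  shows "v i = v j"
proof -
  have chain: "v m = v n" if "m \<le> n" "a n \<le> x" "x \<le> a (Suc m)" for m n
    using \<open>m \<le> n\<close>
  proof (induction n rule: dec_induct)
    case (step k)
    have "a (Suc k) \<le> a n"
      using \<open>k < n\<close> by (simp add: monoD[OF \<open>mono a\<close>])
    moreover have "a (Suc m) \<le> a (Suc k)"
      using \<open>m \<le> k\<close> by (simp add: monoD[OF \<open>mono a\<close>])
    ultimately have "a (Suc k) = x"
      using that(2,3) by (meson order_antisym order_trans)
    then have "v k = v (Suc k)" by (rule junction)
    with step.IH show ?case by (rule trans)
  qed (rule refl)
  show ?thesis
  proof (cases "i \<le> j")
    case True
    then show ?thesis using assms(5,4) by (rule chain)
  next
    case False
    then have "j \<le> i" by simp
    then show ?thesis using assms(3,6) by (rule chain[symmetric])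
  qed
qed

lemma phiZi_junction:
  assumes "aa M h X Y p (Suc k) = ereal t"
  shows "phiZi M h X Y p k t = phiZi M h X Y p (Suc k) t"
proof -
  let ?e = "texit M h X Y (Zi M h X Y p k) (pt M h X Y p k)"
  obtain a where a: "aa M h X Y p k = ereal a"
    using aa_nonneg[of M h X Y p k] assms aa_Suc[of M h X Y p k] texit_nonneg[of M h X Y]
    by (cases "aa M h X Y p k") auto
  moreover obtain e where e: "?e = ereal e"
    using assms aa_Suc[of M h X Y p k] a texit_nonneg[of M h X Y] by (cases ?e) auto
  ultimately have "t - a = e"
    using assms aa_Suc[of M h X Y p k] by simp
  then have "phiZi M h X Y p k t = next_pt M h X Y (pt M h X Y p k)"
    using a e by (simp add: phiZi_def next_pt_def Zi_def Let_def)
  also have "\<dots> = phiZi M h X Y p (Suc k) t"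
    using assms by (simp add: phiZi_def pt_def flow_at_0)
  finally show ?thesis .
qed

lemma phiZi_agree:
  assumes "t \<in> Iint M h X Y p i" "t \<in> Iint M h X Y p j"
  shows "phiZi M h X Y p i t = phiZi M h X Y p j t"
proof (rule mono_chain_const_at_junctions[OF mono_aa])
  show "\<And>k. aa M h X Y p (Suc k) = ereal t \<Longrightarrow>
          phiZi M h X Y p k t = phiZi M h X Y p (Suc k) t"
    by (rule phiZi_junction)
qed (use assms in \<open>simp_all only: Iint_def mem_Collect_eq\<close>)

text \<open>If \<open>t\<close> lies in no interval \<open>I\<^sup>i(p)\<close>, both sides are the same junk value of the
  \<open>SOME\<close> choice.\<close>

lemma phiW_eq_some_piece: "phiW M h X Y w p t = phiZi M h X Y p (SOME i. t \<in> Iint M h X Y p i) t"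
proof (cases "(p, t) \<in> OmegaW M h X Y w")
  case True
  then have piece: "\<exists>i. t \<in> Iint M h X Y p i \<and> Zi M h X Y p i = w"
    unfolding OmegaW_def IW_def by blast
  then have "t \<in> Iint M h X Y p (SOME i. t \<in> Iint M h X Y p i \<and> Zi M h X Y p i = w)"
    by (rule someI2_ex) blast
  moreover have "\<exists>i. t \<in> Iint M h X Y p i"
    using piece by blast
  then have "t \<in> Iint M h X Y p (SOME i. t \<in> Iint M h X Y p i)"
    by (rule someI_ex)
  ultimately show ?thesis
    unfolding phiW_def if_P[OF True] by (rule phiZi_agree)
qed (simp add: phiW_def)

lemma phiW_field_independent: "phiW M h X Y v p t = phiW M h X Y w p t"
  by (simp add: phiW_eq_some_piece)

theorem lemma3p17:
  fixes M :: "'a::euclidean_space set"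
    and h :: "'a \<Rightarrow> real"
    and X Y :: "'a \<Rightarrow> 'a"
  assumes "standing_hyps M h X Y"
  shows "(\<forall>(p, t) \<in> closure (OmegaW M h X Y FX) \<inter> closure (OmegaW M h X Y FZs).
            phiW M h X Y FX p t = phiW M h X Y FZs p t) \<and>
         (\<forall>(p, t) \<in> closure (OmegaW M h X Y FY) \<inter> closure (OmegaW M h X Y FZs).
            phiW M h X Y FY p t = phiW M h X Y FZs p t) \<and>
         (\<forall>(p, t) \<in> closure (OmegaW M h X Y FX) \<inter> closure (OmegaW M h X Y FY).
            phiW M h X Y FX p t = phiW M h X Y FY p t)"
  by (intro conjI; clarify; rule phiW_field_independent)

end
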